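(* Let $S$ be an Arf numerical semigroup and let $a,R$ be positive integers. Then $\overline{S}=aS\cup\{m\in\mathbb{N}_0:\ m\ge R\}$ is an Arf semigroup.
   Context: A numerical semigroup is a submonoid $S$ of $(\mathbb{N}_0,+)$ with finite complement, with elements listed increasingly $\rho_1=0<\rho_2<\cdots$. $S$ is Arf if $\rho_i+\rho_j-\rho_k\in S$ for all positive integers $i\ge j\ge k$. $aS=\{as:\ s\in S\}$. *)

theory Defs
  imports Main
begin

definition numerical_semigroup :: "nat set \<Rightarrow> bool" where
  "numerical_semigroup S \<longleftrightarrow> 0 \<in> S \<and> (\<forall>x\<in>S. \<forall>y\<in>S. x + y \<in> S) \<and> finite (UNIV - S)"

text \<open>Arf: rho_i + rho_j - rho_k in S whenever i >= j >= k, i.e. for all elements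
  x >= y >= z of S (elements listed increasingly).\<close>
definition Arf :: "nat set \<Rightarrow> bool" where
  "Arf S \<longleftrightarrow> numerical_semigroup S \<and>
     (\<forall>x\<in>S. \<forall>y\<in>S. \<forall>z\<in>S. x \<ge> y \<and> y \<ge> z \<longrightarrow> x + y - z \<in> S)"

end

theory Submission
  imports Defs
begin

(* Both operations preserve the two closure properties behind the Arf condition.
   Scaling by a > 0 preserves order, so an Arf triple in aS comes from one in S.
   Adjoining the tail {m. m >= R} is harmless: a sum involving a tail element stays
   in the tail, and so does x + y - z once x >= R, because y >= z; if x < R then
   x, y, z all lie below R and hence in the original set. *)

definition add_closed :: "nat set \<Rightarrow> bool" where
  "add_closed S \<longleftrightarrow> (\<forall>x\<in>S. \<forall>y\<in>S. x + y \<in> S)"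

definition arf_closed :: "nat set \<Rightarrow> bool" where
  "arf_closed S \<longleftrightarrow> (\<forall>x\<in>S. \<forall>y\<in>S. \<forall>z\<in>S. x \<ge> y \<and> y \<ge> z \<longrightarrow> x + y - z \<in> S)"

lemma numerical_semigroup_iff:
  "numerical_semigroup S \<longleftrightarrow> 0 \<in> S \<and> add_closed S \<and> finite (UNIV - S)"
  unfolding numerical_semigroup_def add_closed_def ..

lemma Arf_iff: "Arf S \<longleftrightarrow> numerical_semigroup S \<and> arf_closed S"
  unfolding Arf_def arf_closed_def ..

lemma add_closed_scaled:
  assumes "add_closed S"
  shows "add_closed ((\<lambda>s. a * s) ` S)"
  unfolding add_closed_def
proof (intro ballI)
  fix x y assume "x \<in> (\<lambda>s. a * s) ` S" and "y \<in> (\<lambda>s. a * s) ` S"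
  then obtain s t where "s \<in> S" "t \<in> S" "x = a * s" "y = a * t" by blast
  moreover have "s + t \<in> S" using assms \<open>s \<in> S\<close> \<open>t \<in> S\<close> unfolding add_closed_def by blast
  ultimately have "x + y = a * (s + t)" and "s + t \<in> S" by (simp_all add: add_mult_distrib2)
  then show "x + y \<in> (\<lambda>s. a * s) ` S" by blast
qed

lemma arf_closed_scaled:
  assumes "arf_closed S" and "a > 0"
  shows "arf_closed ((\<lambda>s. a * s) ` S)"
  unfolding arf_closed_def
proof (intro ballI impI)
  fix x y z assume "x \<in> (\<lambda>s. a * s) ` S" "y \<in> (\<lambda>s. a * s) ` S" "z \<in> (\<lambda>s. a * s) ` S"
    and order: "x \<ge> y \<and> y \<ge> z"
  then obtain s t u where stu: "s \<in> S" "t \<in> S" "u \<in> S" "x = a * s" "y = a * t" "z = a * u"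
    by blast
  have "s \<ge> t" "t \<ge> u" using order stu \<open>a > 0\<close> by simp_all
  then have "s + t - u \<in> S" using assms(1) stu(1-3) unfolding arf_closed_def by blast
  moreover have "x + y - z = a * (s + t - u)" using stu by (simp add: algebra_simps diff_mult_distrib2)
  ultimately show "x + y - z \<in> (\<lambda>s. a * s) ` S" by blast
qed

lemma add_closed_Un_tail:
  assumes "add_closed T"
  shows "add_closed (T \<union> {m. m \<ge> R})"
  using assms unfolding add_closed_def by fastforce

lemma arf_closed_Un_tail:
  assumes "arf_closed T"
  shows "arf_closed (T \<union> {m. m \<ge> R})"
  unfolding arf_closed_def
proof (intro ballI impI)
  fix x y z assume x: "x \<in> T \<union> {m. m \<ge> R}" and y: "y \<in> T \<union> {m. m \<ge> R}"
    and z: "z \<in> T \<union> {m. m \<ge> R}" and order: "x \<ge> y \<and> y \<ge> z"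
  show "x + y - z \<in> T \<union> {m. m \<ge> R}"
  proof (cases "x \<ge> R")
    case True
    then show ?thesis using order by auto
  next
    case False
    then have "x \<in> T" "y \<in> T" "z \<in> T" using x y z order by auto
    then show ?thesis using assms order unfolding arf_closed_def by blast
  qed
qed

lemma finite_compl_Un_tail: "finite (UNIV - (T \<union> {m::nat. m \<ge> R}))"
  by (rule finite_subset[of _ "{..<R}"]) auto

lemma Arf_Un_tail:
  assumes "0 \<in> T" and "add_closed T" and "arf_closed T"
  shows "Arf (T \<union> {m. m \<ge> R})"
  using assms add_closed_Un_tail arf_closed_Un_tail finite_compl_Un_tail
  unfolding Arf_iff numerical_semigroup_iff by blast

theorem mainTheorem10:
  fixes S :: "nat set" and a R :: nat
  assumes "Arf S" and "a > 0" and "R > 0"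
  shows "Arf ((\<lambda>s. a * s) ` S \<union> {m. m \<ge> R})"
proof (rule Arf_Un_tail)
  have "0 \<in> S" "add_closed S" "arf_closed S"
    using assms(1) unfolding Arf_iff numerical_semigroup_iff by simp_all
  then show "0 \<in> (\<lambda>s. a * s) ` S" "add_closed ((\<lambda>s. a * s) ` S)"
    "arf_closed ((\<lambda>s. a * s) ` S)"
    using add_closed_scaled arf_closed_scaled \<open>a > 0\<close> by (force, blast, blast)
qed

end
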